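(* Let $(y_1,x_1),\dots,(y_\ell,x_\ell)\in\mathbb{R}^3\times\mathbb{R}^3$, $c_1^2,\dots,c_\ell^2\ge0$, $\hat\mu\in\mathbb{R}$, and let $\hat{\mathcal{D}}$ be an admissible dual matrix. Suppose that $$-\hat\mu\|z_0\|_2^2+2\sum_{i=1}^\ell z_i^\top[\hat{\mathcal{D}}]_{0i}z_i-\sum_{i=1}^\ell z_0^\top\big(2[\hat{\mathcal{D}}]_{0i}-Q_i+c_i^2I_4\big)z_i\ge0\quad\text{for all }z_0,\dots,z_\ell\in\mathbb{R}^4.$$ Then $[\hat{\mathcal{D}}]_{0i}\succeq0$ for every $i=1,\dots,\ell$. Moreover, if $c_i^2\ne\lambda_{\min}(Q_i)$ and $c_i^2\ne\lambda_{\max}(Q_i)$, then $[\hat{\mathcal{D}}]_{0i}\succ0$.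
   Context: For $w=[w_1;w_2;w_3;w_4]\in\mathbb{S}^3$, $R(w)=\begin{bmatrix} w_1^2+w_2^2-w_3^2-w_4^2 & 2(w_2w_3-w_1w_4) & 2(w_2w_4+w_1w_3)\\ 2(w_2w_3+w_1w_4) & w_1^2+w_3^2-w_2^2-w_4^2 & 2(w_3w_4-w_1w_2)\\ 2(w_2w_4-w_1w_3) & 2(w_3w_4+w_1w_2) & w_1^2+w_4^2-w_2^2-w_3^2\end{bmatrix}\in SO(3)$. $Q_i$ is the unique symmetric $4\times4$ matrix with $w^\top Q_iw=\|y_i-R(w)x_i\|_2^2$ for all $w\in\mathbb{S}^3$; $\lambda_{\min},\lambda_{\max}$ are its extreme eigenvalues. For $\mathcal{A}\in\mathbb{R}^{4(\ell+1)\times4(\ell+1)}$, $[\mathcal{A}]_{ij}$ ($0\le i,j\le\ell$) is the $4\times4$ block in rows $4i+1..4i+4$, columns $4j+1..4j+4$. An admissible dual matrix is a symmetric $\mathcal{D}\in\mathbb{R}^{4(\ell+1)\times4(\ell+1)}$ with $[\mathcal{D}]_{ii}+2[\mathcal{D}]_{0i}=0$ for $i=1,\dots,\ell$ and all blocks other than $[\mathcal{D}]_{ii},[\mathcal{D}]_{0i},[\mathcal{D}]_{i0}$ ($i\ge1$) equal to zero. *)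

theory Defs
  imports "HOL-Analysis.Analysis"
begin

definition rotR :: "real^4 \<Rightarrow> real^3^3" where
  "rotR w = (let w1 = w$1; w2 = w$2; w3 = w$3; w4 = w$4 in
     vector [vector [w1^2+w2^2-w3^2-w4^2, 2*(w2*w3-w1*w4), 2*(w2*w4+w1*w3)],
             vector [2*(w2*w3+w1*w4), w1^2+w3^2-w2^2-w4^2, 2*(w3*w4-w1*w2)],
             vector [2*(w2*w4-w1*w3), 2*(w3*w4+w1*w2), w1^2+w4^2-w2^2-w3^2]])"

definition Qmat :: "real^3 \<Rightarrow> real^3 \<Rightarrow> real^4^4" where
  "Qmat y x = (THE Q. transpose Q = Q \<and>
      (\<forall>w::real^4. norm w = 1 \<longrightarrow> w \<bullet> (Q *v w) = (norm (y - rotR w *v x))^2))"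

definition eigvals :: "real^4^4 \<Rightarrow> real set" where
  "eigvals A = {e. \<exists>v::real^4. v \<noteq> 0 \<and> A *v v = e *\<^sub>R v}"

definition lam_min :: "real^4^4 \<Rightarrow> real" where "lam_min A = Min (eigvals A)"
definition lam_max :: "real^4^4 \<Rightarrow> real" where "lam_max A = Max (eigvals A)"

definition psd :: "real^4^4 \<Rightarrow> bool" where
  "psd A \<longleftrightarrow> transpose A = A \<and> (\<forall>z. 0 \<le> z \<bullet> (A *v z))"

definition pd :: "real^4^4 \<Rightarrow> bool" where
  "pd A \<longleftrightarrow> transpose A = A \<and> (\<forall>z. z \<noteq> 0 \<longrightarrow> 0 < z \<bullet> (A *v z))"

(* A 4(l+1) x 4(l+1) matrix given by its 4x4 blocks D i j, 0 <= i,j <= l *)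
definition admissible_dual :: "nat \<Rightarrow> (nat \<Rightarrow> nat \<Rightarrow> real^4^4) \<Rightarrow> bool" where
  "admissible_dual l D \<longleftrightarrow>
     (\<forall>i\<le>l. \<forall>j\<le>l. D j i = transpose (D i j)) \<and>
     (\<forall>i\<in>{1..l}. D i i + 2 *\<^sub>R D 0 i = 0) \<and>
     (\<forall>i\<le>l. \<forall>j\<le>l. \<not> (i = j \<and> 1 \<le> i) \<and> \<not> (i = 0 \<and> 1 \<le> j) \<and> \<not> (j = 0 \<and> 1 \<le> i)
        \<longrightarrow> D i j = 0)"

end

theory Submission
  imports Defs
begin

(* Testing the form with z supported on block i gives [D]_0i >= 0. If v' [D]_0i v = 0 then
   [D]_0i v = 0, and testing with z_0 = u, z_i = s v leaves a function of s that is affine with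
   slope -u' M_i v, where M_i = 2 [D]_0i - Q_i + c_i^2 I; being bounded below it forces M_i v = 0,
   i.e. Q_i v = c_i^2 v. But Q_i = (|x_i|^2 + |y_i|^2) I - 2 P_i, where the symmetric matrix P_i
   of the quadratic form w |-> y_i' R(w) x_i satisfies P_i^2 = |x_i|^2 |y_i|^2 I, so Q_i has only
   the two eigenvalues (|x_i| -+ |y_i|)^2, and c_i^2 would be lambda_min or lambda_max. *)

lemma quadratic_nonneg_imp_linear_coeff_zero:
  fixes a b :: real
  assumes nonneg: "\<And>t. 0 \<le> a * t\<^sup>2 + b * t"
  shows "b = 0"
proof -
  have "0 \<le> a" using nonneg[of 1] nonneg[of "-1"] by simp
  define t where "t = - b / (a + 1)"
  have "a * t + b = b / (a + 1)"
    unfolding t_def using \<open>0 \<le> a\<close> by (simp add: field_simps)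
  have "a * t\<^sup>2 + b * t = t * (a * t + b)" by (simp add: power2_eq_square algebra_simps)
  also have "\<dots> = t * (b / (a + 1))" unfolding \<open>a * t + b = b / (a + 1)\<close> ..
  also have "\<dots> = - (b / (a + 1))\<^sup>2" by (simp add: t_def power2_eq_square)
  finally have "a * t\<^sup>2 + b * t = - (b / (a + 1))\<^sup>2" .
  then show ?thesis using nonneg[of t] \<open>0 \<le> a\<close> by simp
qed

lemma affine_nonneg_imp_slope_zero:
  fixes b c :: real
  assumes nonneg: "\<And>t. 0 \<le> c + b * t"
  shows "b = 0"
proof (rule ccontr)
  assume "b \<noteq> 0"
  then have "c + b * (- (\<bar>c\<bar> + 1) / b) < 0" by simp
  with nonneg show False by (meson not_le)
qed

lemma Min_or_Max_if_subset_doubleton: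
  fixes S :: "'a::linorder set"
  assumes "S \<subseteq> {a, b}" "c \<in> S"
  shows "c = Min S \<or> c = Max S"
proof -
  have "finite S" using assms(1) finite_subset by blast
  then have "Min S \<in> S" "Max S \<in> S" "Min S \<le> c" "c \<le> Max S"
    using assms(2) by (auto intro: Min_in Max_in)
  moreover have "c = Min S \<or> c = Max S \<or> Min S = Max S"
    using calculation(1,2) assms by blast
  ultimately show ?thesis by auto
qed

lemma transpose_diff: "transpose (A - B) = transpose A - transpose (B :: 'a::ab_group_add^'n^'m)"
  by (simp add: transpose_def vec_eq_iff)

lemma inner_symmetric_matrix_swap:
  fixes A :: "real^'n^'n"
  assumes "transpose A = A"
  shows "u \<bullet> (A *v v) = v \<bullet> (A *v u)"
  by (metis assms dot_lmul_matrix inner_commute transpose_matrix_vector)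

lemma symmetric_matrix_eq_if_sphere_forms_eq:
  fixes A B :: "real^'n^'n"
  assumes "transpose A = A" "transpose B = B"
    and sphere: "\<And>w. norm w = 1 \<Longrightarrow> w \<bullet> (A *v w) = w \<bullet> (B *v w)"
  shows "A = B"
proof -
  have form: "w \<bullet> (A *v w) = w \<bullet> (B *v w)" for w
  proof (cases "w = 0")
    case False
    then have "(w /\<^sub>R norm w) \<bullet> (A *v (w /\<^sub>R norm w)) = (w /\<^sub>R norm w) \<bullet> (B *v (w /\<^sub>R norm w))"
      by (intro sphere) simp
    with False show ?thesis by (simp add: matrix_vector_mult_scaleR)
  qed simp
  have "u \<bullet> (A *v v) = u \<bullet> (B *v v)" for u v
    using form[of "u + v"] form[of u] form[of v]
      inner_symmetric_matrix_swap[OF assms(1), of u v] inner_symmetric_matrix_swap[OF assms(2), of u v]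
    by (simp add: matrix_vector_right_distrib inner_add_left inner_add_right)
  then have "A *v v = B *v v" for v by (metis inner_diff_right inner_eq_zero_iff right_minus_eq)
  then show ?thesis by (rule matrix_eq[THEN iffD2, rule_format])
qed

lemma psd_form_zero_imp_kernel:
  fixes A :: "real^'n^'n"
  assumes sym: "transpose A = A" and nonneg: "\<And>z. 0 \<le> z \<bullet> (A *v z)"
    and zero: "v \<bullet> (A *v v) = 0"
  shows "A *v v = 0"
proof -
  let ?u = "A *v v"
  have expand: "(v + t *\<^sub>R ?u) \<bullet> (A *v (v + t *\<^sub>R ?u))
      = (?u \<bullet> (A *v ?u)) * t\<^sup>2 + (2 * (?u \<bullet> ?u)) * t" for t
    using zero inner_symmetric_matrix_swap[OF sym, of v ?u]
    by (simp add: matrix_vector_right_distrib matrix_vector_mult_scaleR inner_add_left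
        inner_add_right power2_eq_square algebra_simps)
  have "2 * (?u \<bullet> ?u) = 0"
    using nonneg[of "v + _ *\<^sub>R ?u"] unfolding expand by (rule quadratic_nonneg_imp_linear_coeff_zero)
  then show ?thesis by simp
qed

lemma eigenvalue_of_matrix_squaring_to_scalar:
  fixes P :: "real^'n^'n"
  assumes square: "P *v (P *v v) = k\<^sup>2 *\<^sub>R v" and eigen: "P *v v = t *\<^sub>R v" and "v \<noteq> 0"
  shows "t = k \<or> t = - k"
proof -
  have "t\<^sup>2 *\<^sub>R v = k\<^sup>2 *\<^sub>R v"
    using square by (simp add: eigen matrix_vector_mult_scaleR power2_eq_square)
  then have "t\<^sup>2 = k\<^sup>2" using \<open>v \<noteq> 0\<close> by simp
  then show ?thesis by (simp add: power2_eq_iff)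
qed

lemma vector_4 [simp]:
  "(vector [a, b, c, d] :: ('a::zero)^4) $ 1 = a"
  "(vector [a, b, c, d] :: ('a::zero)^4) $ 2 = b"
  "(vector [a, b, c, d] :: ('a::zero)^4) $ 3 = c"
  "(vector [a, b, c, d] :: ('a::zero)^4) $ 4 = d"
  unfolding vector_def by simp_all

definition inner_rotR_matrix :: "real^3 \<Rightarrow> real^3 \<Rightarrow> real^4^4" where
  "inner_rotR_matrix y x = (let x1 = x$1; x2 = x$2; x3 = x$3; y1 = y$1; y2 = y$2; y3 = y$3 in
     vector [vector [y1*x1+y2*x2+y3*x3, y3*x2-y2*x3, y1*x3-y3*x1, y2*x1-y1*x2],
             vector [y3*x2-y2*x3, y1*x1-y2*x2-y3*x3, y1*x2+y2*x1, y1*x3+y3*x1],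
             vector [y1*x3-y3*x1, y1*x2+y2*x1, y2*x2-y1*x1-y3*x3, y2*x3+y3*x2],
             vector [y2*x1-y1*x2, y1*x3+y3*x1, y2*x3+y3*x2, y3*x3-y1*x1-y2*x2]])"

lemma inner_rotR_matrix_symmetric: "transpose (inner_rotR_matrix y x) = inner_rotR_matrix y x"
  unfolding inner_rotR_matrix_def Let_def transpose_def vec_eq_iff forall_4 by simp

lemma inner_rotR_eq_quadratic_form: "y \<bullet> (rotR w *v x) = w \<bullet> (inner_rotR_matrix y x *v w)"
  unfolding inner_rotR_matrix_def rotR_def Let_def inner_vec_def matrix_vector_mult_def sum_3 sum_4
  by simp algebra

lemma norm_rotR_mult_sq: "(norm (rotR w *v x))\<^sup>2 = (w \<bullet> w)\<^sup>2 * (x \<bullet> x)"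
  unfolding power2_norm_eq_inner rotR_def Let_def inner_vec_def matrix_vector_mult_def sum_3 sum_4
  by simp algebra

lemma inner_rotR_matrix_square:
  "inner_rotR_matrix y x *v (inner_rotR_matrix y x *v v) = (norm x * norm y)\<^sup>2 *\<^sub>R v"
proof -
  have "inner_rotR_matrix y x *v (inner_rotR_matrix y x *v v) = ((x \<bullet> x) * (y \<bullet> y)) *\<^sub>R v"
    unfolding inner_rotR_matrix_def Let_def inner_vec_def matrix_vector_mult_def sum_3 sum_4
      vec_eq_iff forall_4
    by simp algebra
  then show ?thesis by (simp add: power_mult_distrib dot_square_norm)
qed

lemma Qmat_eq: "Qmat y x = (x \<bullet> x + y \<bullet> y) *\<^sub>R mat 1 - 2 *\<^sub>R inner_rotR_matrix y x"
proof -
  define Q where "Q = (x \<bullet> x + y \<bullet> y) *\<^sub>R mat 1 - 2 *\<^sub>R inner_rotR_matrix y x"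
  have Q_apply: "Q *v w = (x \<bullet> x + y \<bullet> y) *\<^sub>R w - 2 *\<^sub>R (inner_rotR_matrix y x *v w)" for w
    unfolding Q_def
    by (simp add: matrix_vector_mult_diff_rdistrib scaleR_matrix_vector_assoc[symmetric])
  have Q_symmetric: "transpose Q = Q"
    unfolding Q_def by (simp add: transpose_diff transpose_scalar inner_rotR_matrix_symmetric)
  have Q_form: "w \<bullet> (Q *v w) = (norm (y - rotR w *v x))\<^sup>2" if "norm w = 1" for w
  proof -
    have "w \<bullet> w = 1" using that by (simp add: norm_eq_1)
    have "(norm (y - rotR w *v x))\<^sup>2 = y \<bullet> y - 2 * (y \<bullet> (rotR w *v x)) + (norm (rotR w *v x))\<^sup>2"
      by (simp add: power2_norm_eq_inner inner_diff_left inner_diff_right inner_commute)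
    also have "\<dots> = y \<bullet> y - 2 * (w \<bullet> (inner_rotR_matrix y x *v w)) + x \<bullet> x"
      by (simp add: inner_rotR_eq_quadratic_form norm_rotR_mult_sq \<open>w \<bullet> w = 1\<close>)
    finally show ?thesis by (simp add: Q_apply inner_diff_right \<open>w \<bullet> w = 1\<close>)
  qed
  show ?thesis
    unfolding Qmat_def Q_def[symmetric]
  proof (rule the_equality)
    fix Q' :: "real^4^4"
    assume "transpose Q' = Q' \<and> (\<forall>w. norm w = 1 \<longrightarrow> w \<bullet> (Q' *v w) = (norm (y - rotR w *v x))\<^sup>2)"
    then show "Q' = Q"
      using Q_symmetric Q_form by (auto intro!: symmetric_matrix_eq_if_sphere_forms_eq[of Q' Q])
  qed (use Q_symmetric Q_form in blast)
qed

lemma eigvals_Qmat_subset: "eigvals (Qmat y x) \<subseteq> {(norm x - norm y)\<^sup>2, (norm x + norm y)\<^sup>2}"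
proof
  fix e assume "e \<in> eigvals (Qmat y x)"
  then obtain v where "v \<noteq> 0" and eigen: "Qmat y x *v v = e *\<^sub>R v"
    unfolding eigvals_def by blast
  define P where "P = inner_rotR_matrix y x"
  define t where "t = (x \<bullet> x + y \<bullet> y - e) / 2"
  have "(x \<bullet> x + y \<bullet> y) *\<^sub>R v - 2 *\<^sub>R (P *v v) = e *\<^sub>R v"
    using eigen unfolding Qmat_eq P_def[symmetric]
    by (simp add: matrix_vector_mult_diff_rdistrib scaleR_matrix_vector_assoc[symmetric])
  then have "2 *\<^sub>R (P *v v) = (x \<bullet> x + y \<bullet> y) *\<^sub>R v - e *\<^sub>R v"
    by (simp add: algebra_simps)
  then have "P *v v = (1 / 2) *\<^sub>R ((x \<bullet> x + y \<bullet> y) *\<^sub>R v - e *\<^sub>R v)"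
    by (metis scaleR_scaleR scaleR_one nonzero_divide_eq_eq zero_neq_numeral)
  then have "P *v v = t *\<^sub>R v"
    unfolding t_def by (simp only: scaleR_diff_left[symmetric] scaleR_scaleR) simp
  then have "t = norm x * norm y \<or> t = - (norm x * norm y)"
    using inner_rotR_matrix_square \<open>v \<noteq> 0\<close> unfolding P_def
    by (intro eigenvalue_of_matrix_squaring_to_scalar)
  then have "e = (norm x)\<^sup>2 + (norm y)\<^sup>2 - 2 * norm x * norm y \<or>
             e = (norm x)\<^sup>2 + (norm y)\<^sup>2 + 2 * norm x * norm y"
    unfolding t_def dot_square_norm by auto
  then show "e \<in> {(norm x - norm y)\<^sup>2, (norm x + norm y)\<^sup>2}"
    by (simp add: power2_diff power2_sum)
qed

lemma eigvals_Qmat_eq_lam_min_or_lam_max: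
  "c \<in> eigvals (Qmat y x) \<Longrightarrow> c = lam_min (Qmat y x) \<or> c = lam_max (Qmat y x)"
  unfolding lam_min_def lam_max_def by (rule Min_or_Max_if_subset_doubleton[OF eigvals_Qmat_subset])

definition dual_quadratic_form ::
    "nat \<Rightarrow> (nat \<Rightarrow> real^4^4) \<Rightarrow> (nat \<Rightarrow> nat \<Rightarrow> real^4^4) \<Rightarrow> real \<Rightarrow> (nat \<Rightarrow> real^4) \<Rightarrow> real"
  where "dual_quadratic_form l M D mu z =
    - mu * (norm (z 0))\<^sup>2 + 2 * (\<Sum>i=1..l. z i \<bullet> (D 0 i *v z i)) - (\<Sum>i=1..l. z 0 \<bullet> (M i *v z i))"

lemma dual_quadratic_form_nonneg_imp_block_nonneg:
  assumes nonneg: "\<forall>z. 0 \<le> dual_quadratic_form l M D mu z" and i: "i \<in> {1..l}"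
  shows "0 \<le> v \<bullet> (D 0 i *v v)"
proof -
  define z :: "nat \<Rightarrow> real^4" where "z = (\<lambda>j. if j = i then v else 0)"
  have "(\<Sum>j=1..l. z j \<bullet> (D 0 j *v z j)) = (\<Sum>j=1..l. if j = i then v \<bullet> (D 0 i *v v) else 0)"
    by (rule sum.cong) (auto simp: z_def)
  then have "dual_quadratic_form l M D mu z = 2 * (v \<bullet> (D 0 i *v v))"
    using i by (simp add: dual_quadratic_form_def z_def)
  then show ?thesis using nonneg[rule_format, of z] by simp
qed

lemma dual_quadratic_form_nonneg_imp_coupling_kernel:
  assumes nonneg: "\<forall>z. 0 \<le> dual_quadratic_form l M D mu z" and i: "i \<in> {1..l}"
    and kernel: "D 0 i *v v = 0"
  shows "M i *v v = 0"
proof -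
  have "- (u \<bullet> (M i *v v)) = 0" for u
  proof (rule affine_nonneg_imp_slope_zero)
    fix s
    define z :: "nat \<Rightarrow> real^4" where "z = (\<lambda>j. if j = 0 then u else if j = i then s *\<^sub>R v else 0)"
    have "(\<Sum>j=1..l. z j \<bullet> (D 0 j *v z j)) = 0"
      by (rule sum.neutral) (auto simp: z_def matrix_vector_mult_scaleR kernel)
    moreover have "(\<Sum>j=1..l. z 0 \<bullet> (M j *v z j)) = (\<Sum>j=1..l. if j = i then s * (u \<bullet> (M i *v v)) else 0)"
      by (rule sum.cong) (auto simp: z_def matrix_vector_mult_scaleR)
    ultimately have "dual_quadratic_form l M D mu z = - mu * (norm u)\<^sup>2 + (- (u \<bullet> (M i *v v))) * s"
      using i by (simp add: dual_quadratic_form_def z_def)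
    then show "0 \<le> - mu * (norm u)\<^sup>2 + (- (u \<bullet> (M i *v v))) * s"
      using nonneg[rule_format, of z] by simp
  qed
  from this[of "M i *v v"] show ?thesis by simp
qed

lemma dual_quadratic_form_nonneg_imp_eigenvector:
  assumes nonneg: "\<forall>z. 0 \<le> dual_quadratic_form l M D mu z" and i: "i \<in> {1..l}"
    and sym: "transpose (D 0 i) = D 0 i" and zero: "v \<bullet> (D 0 i *v v) = 0"
    and M: "M i = 2 *\<^sub>R D 0 i - Q + c *\<^sub>R mat 1"
  shows "Q *v v = c *\<^sub>R v"
proof -
  have kernel: "D 0 i *v v = 0"
    using sym dual_quadratic_form_nonneg_imp_block_nonneg[OF nonneg i] zero
    by (rule psd_form_zero_imp_kernel)
  have "M i *v v = 0" using nonneg i kernel by (rule dual_quadratic_form_nonneg_imp_coupling_kernel)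
  with kernel show ?thesis
    unfolding M by (simp add: matrix_vector_mult_add_rdistrib matrix_vector_mult_diff_rdistrib
        scaleR_matrix_vector_assoc[symmetric] matrix_vector_mult_scaleR)
qed

lemma admissible_dual_off_diagonal_symmetric:
  assumes "admissible_dual l D" "i \<in> {1..l}"
  shows "transpose (D 0 i) = D 0 i"
proof -
  have "i \<le> l" using assms(2) by simp
  with assms have "transpose (D i i) = D i i" unfolding admissible_dual_def by metis
  have "D i i + 2 *\<^sub>R D 0 i = 0" using assms unfolding admissible_dual_def by blast
  then have "D 0 i = (- 1 / 2) *\<^sub>R D i i" by (simp add: eq_neg_iff_add_eq_0[symmetric])
  then show ?thesis using \<open>transpose (D i i) = D i i\<close> by (simp only: transpose_scalar)
qed

theorem lemmaB2:
  fixes l :: nat and y x :: "nat \<Rightarrow> real^3" and c2 :: "nat \<Rightarrow> real" and mu :: real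
    and D :: "nat \<Rightarrow> nat \<Rightarrow> real^4^4"
  assumes c2_nonneg: "\<forall>i\<in>{1..l}. 0 \<le> c2 i"
    and adm: "admissible_dual l D"
    and hyp: "\<forall>z :: nat \<Rightarrow> real^4.
       0 \<le> - mu * (norm (z 0))^2 + 2 * (\<Sum>i=1..l. z i \<bullet> (D 0 i *v z i))
            - (\<Sum>i=1..l. z 0 \<bullet> ((2 *\<^sub>R D 0 i - Qmat (y i) (x i) + c2 i *\<^sub>R mat 1) *v z i))"
  shows "\<forall>i\<in>{1..l}. psd (D 0 i) \<and>
           (c2 i \<noteq> lam_min (Qmat (y i) (x i)) \<and> c2 i \<noteq> lam_max (Qmat (y i) (x i))
              \<longrightarrow> pd (D 0 i))"
proof
  fix i assume i: "i \<in> {1..l}"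
  define M where "M j = 2 *\<^sub>R D 0 j - Qmat (y j) (x j) + c2 j *\<^sub>R mat 1" for j
  have form: "\<forall>z. 0 \<le> dual_quadratic_form l M D mu z"
    using hyp unfolding dual_quadratic_form_def M_def .
  have sym: "transpose (D 0 i) = D 0 i"
    using adm i by (rule admissible_dual_off_diagonal_symmetric)
  have nonneg: "0 \<le> v \<bullet> (D 0 i *v v)" for v
    using form i by (rule dual_quadratic_form_nonneg_imp_block_nonneg)
  have eigen: "c2 i \<in> eigvals (Qmat (y i) (x i))" if "v \<noteq> 0" "v \<bullet> (D 0 i *v v) = 0" for v
    using dual_quadratic_form_nonneg_imp_eigenvector[OF form i sym that(2) M_def] that(1)
    unfolding eigvals_def by blast
  show "psd (D 0 i) \<and> (c2 i \<noteq> lam_min (Qmat (y i) (x i)) \<and> c2 i \<noteq> lam_max (Qmat (y i) (x i))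
      \<longrightarrow> pd (D 0 i))"
  proof (intro conjI impI)
    show "psd (D 0 i)" unfolding psd_def using sym nonneg by blast
    assume "c2 i \<noteq> lam_min (Qmat (y i) (x i)) \<and> c2 i \<noteq> lam_max (Qmat (y i) (x i))"
    then have "c2 i \<notin> eigvals (Qmat (y i) (x i))"
      using eigvals_Qmat_eq_lam_min_or_lam_max by blast
    then have "0 < v \<bullet> (D 0 i *v v)" if "v \<noteq> 0" for v
      using eigen[OF that] nonneg[of v] by (auto simp: less_le)
    then show "pd (D 0 i)" unfolding pd_def using sym by blast
  qed
qed

end
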